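(* Suppose Assumption A(ii) holds and $F$ is strongly $K$-convex with some modulus in $\mathrm{int}(K)$. Let $\{x^k\}$ be an infinite sequence generated by Algorithm 1 with $G_k\in\mathcal{S}_{\ell,\mu}(F,x^k)$ for all $k$, where $\ell\prec_K\mu$. Then: (i) $\{x^k\}$ converges to an efficient solution $x^*$ of $\min_K F(x)$; (ii) $\|x^{k+1}-x^*\|\le\sqrt{\max_{c^*\in C}\frac{\langle c^*,\ell\rangle}{\langle c^*,\mu\rangle}}\,\|x^k-x^*\|$ for all $k\ge0$.
   Context: $K\subset\mathbb{R}^m$ is a closed, convex, pointed cone with nonempty interior; $y\preceq_K y'$ iff $y'-y\in K$, $y\prec_K y'$ iff $y'-y\in\mathrm{int}(K)$. $K^*=\{c:\langle c,y\rangle\ge0\ \forall y\in K\}$; $C$ is a compact convex set with $0\notin C$, $\mathrm{cone}(C)=K^*$. $F:\mathbb{R}^n\to\mathbb{R}^m$ differentiable with Jacobian $JF$. $x^*$ is efficient if there is no $x$ with $F(x)\preceq_K F(x^* )$ and $F(x)\ne F(x^* )$; $K$-stationary if $\mathrm{range}(JF(x^* ))\cap(-\mathrm{int}(K))=\emptyset$. For differentiable $\Phi$: strongly $K$-convex with $\mu\in K$ means $J\Phi(x)(y-x)+\tfrac12\|y-x\|^2\mu\preceq_K\Phi(y)-\Phi(x)$ $\forall x,y$; $K$-smooth with $\ell\in K$ means $\Phi(y)-\Phi(x)\preceq_K J\Phi(x)(y-x)+\tfrac12\|y-x\|^2\ell$ $\forall x,y$. Surrogate class $\mathcal{S}_{\ell,\mu}(F,x^k)$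 ($\ell\in K,\mu\in\mathrm{int}(K)$): differentiable $G_k$ strongly $K$-convex with $\mu$ such that, with $x^{k+1}$ the minimizer of $x\mapsto\max_{c^*\in C}\langle c^*,G_k(x)\rangle$ and $H_k:=G_k-F+F(x^k)$: $F(x^{k+1})-F(x^k)\preceq_K G_k(x^{k+1})$; $H_k$ is $K$-smooth with $\ell$, $H_k(x^k)=0$, $JH_k(x^k)=0$. Algorithm 1: from $x^0$, choose $G_k\in\mathcal{S}_{\ell,\mu}(F,x^k)$, set $x^{k+1}:=\arg\min_x\max_{c^*\in C}\langle c^*,G_k(x)\rangle$, stop if $x^{k+1}=x^k$. Assumption A(ii): whenever $x^k\to x^*$ along an infinite index set $\mathcal{K}$, $G_k\in\mathcal{S}_{\ell,\mu}(F,x^k)$ and $\max_{c^*\in C}\langle c^*,G_k(x^{k+1})\rangle\to0$ along $\mathcal{K}$, $x^*$ is $K$-stationary. *)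

theory Defs
  imports "HOL-Analysis.Analysis"
begin

definition proper_cone :: "'b::euclidean_space set \<Rightarrow> bool" where
  "proper_cone K \<longleftrightarrow> cone K \<and> closed K \<and> convex K \<and> K \<inter> uminus ` K = {0} \<and> interior K \<noteq> {}"

definition kle :: "'b::euclidean_space set \<Rightarrow> 'b \<Rightarrow> 'b \<Rightarrow> bool" where
  "kle K y y' \<longleftrightarrow> y' - y \<in> K"

definition kless :: "'b::euclidean_space set \<Rightarrow> 'b \<Rightarrow> 'b \<Rightarrow> bool" where
  "kless K y y' \<longleftrightarrow> y' - y \<in> interior K"

definition dual_cone :: "'b::euclidean_space set \<Rightarrow> 'b set" where
  "dual_cone K = {c. \<forall>y\<in>K. 0 \<le> c \<bullet> y}"

definition dual_generator :: "'b::euclidean_space set \<Rightarrow> 'b set \<Rightarrow> bool" where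
  "dual_generator K C \<longleftrightarrow> compact C \<and> convex C \<and> 0 \<notin> C \<and> cone hull C = dual_cone K"

definition efficient :: "'b::euclidean_space set \<Rightarrow> ('a \<Rightarrow> 'b) \<Rightarrow> 'a \<Rightarrow> bool" where
  "efficient K F xs \<longleftrightarrow> \<not> (\<exists>x. kle K (F x) (F xs) \<and> F x \<noteq> F xs)"

text \<open>K-stationarity; J is the derivative (Jacobian as linear map) of F at xs.\<close>
definition K_stationary :: "'b::euclidean_space set \<Rightarrow> ('a \<Rightarrow> 'a \<Rightarrow> 'b) \<Rightarrow> 'a \<Rightarrow> bool" where
  "K_stationary K J xs \<longleftrightarrow> range (J xs) \<inter> uminus ` interior K = {}"

definition strongly_K_convex ::
  "'b::euclidean_space set \<Rightarrow> ('a::real_normed_vector \<Rightarrow> 'b) \<Rightarrow> ('a \<Rightarrow> 'a \<Rightarrow> 'b) \<Rightarrow> 'b \<Rightarrow> bool" where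
  "strongly_K_convex K \<Phi> J\<Phi> \<mu> \<longleftrightarrow>
     (\<forall>x y. kle K (J\<Phi> x (y - x) + ((norm (y - x))\<^sup>2 / 2) *\<^sub>R \<mu>) (\<Phi> y - \<Phi> x))"

definition K_smooth ::
  "'b::euclidean_space set \<Rightarrow> ('a::real_normed_vector \<Rightarrow> 'b) \<Rightarrow> ('a \<Rightarrow> 'a \<Rightarrow> 'b) \<Rightarrow> 'b \<Rightarrow> bool" where
  "K_smooth K \<Phi> J\<Phi> l \<longleftrightarrow>
     (\<forall>x y. kle K (\<Phi> y - \<Phi> x) (J\<Phi> x (y - x) + ((norm (y - x))\<^sup>2 / 2) *\<^sub>R l))"

definition scal :: "'b::euclidean_space set \<Rightarrow> ('a \<Rightarrow> 'b) \<Rightarrow> 'a \<Rightarrow> real" where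
  "scal C G x = Sup ((\<lambda>c. c \<bullet> G x) ` C)"

definition is_minimizer :: "('a \<Rightarrow> real) \<Rightarrow> 'a \<Rightarrow> bool" where
  "is_minimizer f z \<longleftrightarrow> (\<forall>y. f z \<le> f y)"

text \<open>Surrogate class S_{l,mu}(F,xk); JF is the derivative of F.
  H = G - F + F xk has derivative JG - JF.\<close>
definition surrogate ::
  "'b::euclidean_space set \<Rightarrow> 'b set \<Rightarrow> ('a::euclidean_space \<Rightarrow> 'b) \<Rightarrow> ('a \<Rightarrow> 'a \<Rightarrow> 'b)
     \<Rightarrow> 'b \<Rightarrow> 'b \<Rightarrow> 'a \<Rightarrow> ('a \<Rightarrow> 'b) \<Rightarrow> bool" where
  "surrogate K C F JF l \<mu> xk G \<longleftrightarrow>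
     (\<exists>JG. (\<forall>x. (G has_derivative JG x) (at x))
        \<and> strongly_K_convex K G JG \<mu>
        \<and> (\<forall>z. is_minimizer (scal C G) z \<longrightarrow> kle K (F z - F xk) (G z))
        \<and> K_smooth K (\<lambda>x. G x - F x + F xk) (\<lambda>x v. JG x v - JF x v) l
        \<and> G xk - F xk + F xk = 0
        \<and> (\<forall>v. JG xk v - JF xk v = 0))"

end

theory Submission
  imports Defs
begin

text \<open>Every surrogate step decreases each scalarization \<open>\<langle>c, F\<rangle>\<close>, \<open>c \<in> C\<close>, and strong
  \<open>K\<close>-convexity of \<open>F\<close> makes these sublevel sets bounded, so the iterates have a cluster
  point \<open>x*\<close> lying below all of them. Comparing the strong convexity of \<open>G\<^sub>k\<close> on the segment
  from \<open>x\<^sup>k\<^sup>+\<^sup>1\<close> to \<open>x*\<close> with the \<open>K\<close>-smoothness of \<open>G\<^sub>k - F\<close> at \<open>x\<^sup>k\<close> yields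
  \<open>\<parallel>x\<^sup>k\<^sup>+\<^sup>1 - x*\<parallel>\<^sup>2 \<le> max\<^sub>c \<langle>c,\<ell>\<rangle>/\<langle>c,\<mu>\<rangle> \<cdot> \<parallel>x\<^sup>k - x*\<parallel>\<^sup>2\<close>, a contraction because \<open>\<ell> \<prec>\<^sub>K \<mu>\<close>;
  hence the whole sequence converges to \<open>x*\<close>. The optimal surrogate values are squeezed to \<open>0\<close>,
  so \<open>x*\<close> is \<open>K\<close>-stationary by Assumption A(ii), and a \<open>K\<close>-stationary point of a strongly
  \<open>K\<close>-convex map is efficient.\<close>

lemma compact_Sup_attained:
  fixes f :: "'a::topological_space \<Rightarrow> real"
  assumes "compact S" "S \<noteq> {}" "continuous_on S f"
  obtains c where "c \<in> S" "Sup (f ` S) = f c"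
proof -
  obtain c where "c \<in> S" "\<forall>y\<in>S. f y \<le> f c"
    using continuous_attains_sup[OF assms] by blast
  then show thesis
    by (intro that[of c]) (auto intro!: cSup_eq_maximum)
qed

lemma compact_le_Sup:
  fixes f :: "'a::topological_space \<Rightarrow> real"
  assumes "compact S" "continuous_on S f" "c \<in> S"
  shows "f c \<le> Sup (f ` S)"
proof (rule cSup_upper)
  show "bdd_above (f ` S)"
    using assms(1,2) by (intro bounded_imp_bdd_above compact_imp_bounded compact_continuous_image)
qed (use assms(3) in simp)

lemma le_if_one_minus_mult_le:
  fixes D X :: real
  assumes "\<And>t. 0 < t \<Longrightarrow> t < 1 \<Longrightarrow> (1 - t) * D \<le> X"
  shows "D \<le> X"
proof (rule tendsto_upperbound)
  show "((\<lambda>t. (1 - t) * D) \<longlongrightarrow> D) (at_right 0)"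
    by (auto intro!: tendsto_eq_intros)
  show "\<forall>\<^sub>F t in at_right 0. (1 - t) * D \<le> X"
    using assms by (intro eventually_at_rightI[of 0 1]) auto
qed simp

lemma LIMSEQ_of_contraction_factor:
  fixes x :: "nat \<Rightarrow> 'a::real_normed_vector"
  assumes "0 \<le> \<rho>" "\<rho> < 1" and contr: "\<And>k. norm (x (Suc k) - y) \<le> \<rho> * norm (x k - y)"
  shows "x \<longlonglongrightarrow> y"
proof -
  have geometric: "norm (x k - y) \<le> \<rho> ^ k * norm (x 0 - y)" for k
  proof (induction k)
    case (Suc k)
    have "norm (x (Suc k) - y) \<le> \<rho> * norm (x k - y)" by (rule contr)
    also have "\<dots> \<le> \<rho> * (\<rho> ^ k * norm (x 0 - y))"
      using Suc assms(1) by (rule mult_left_mono)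
    finally show ?case by (simp add: mult.assoc)
  qed simp
  have "(\<lambda>k. \<rho> ^ k * norm (x 0 - y)) \<longlonglongrightarrow> 0"
    using assms(1,2) by (intro tendsto_mult_left_zero LIMSEQ_power_zero) simp
  then have "(\<lambda>k. x k - y) \<longlonglongrightarrow> 0"
    by (rule Lim_null_comparison[rotated]) (use geometric in \<open>simp add: always_eventually\<close>)
  then show ?thesis using Lim_null by blast
qed

lemma decseq_le_subseq_limit:
  fixes f :: "'a::t2_space \<Rightarrow> real"
  assumes "decseq (\<lambda>k. f (x k))" "isCont f y" "strict_mono r" "(x \<circ> r) \<longlonglongrightarrow> y"
  shows "f y \<le> f (x j)"
proof (rule LIMSEQ_le_const2)
  show "(\<lambda>n. f (x (r n))) \<longlonglongrightarrow> f y"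
    using isCont_tendsto_compose[OF assms(2,4)] by (simp add: o_def)
  show "\<exists>N. \<forall>n\<ge>N. f (x (r n)) \<le> f (x j)"
  proof (intro exI allI impI)
    fix n assume "j \<le> n"
    then show "f (x (r n)) \<le> f (x j)"
      using decseqD[OF assms(1) seq_suble[OF assms(3)]] decseqD[OF assms(1)] order_trans
      by blast
  qed
qed

lemma kle_imp_inner_le: "kle K a b \<Longrightarrow> c \<in> dual_cone K \<Longrightarrow> c \<bullet> a \<le> c \<bullet> b"
  unfolding kle_def dual_cone_def by (auto simp: inner_diff_right)

lemma dual_cone_inner_interior_pos:
  fixes c v :: "'b::euclidean_space"
  assumes "c \<in> dual_cone K" "c \<noteq> 0" "v \<in> interior K"
  shows "0 < c \<bullet> v"
proof -
  obtain e where e: "e > 0" "ball v e \<subseteq> K" using assms(3) mem_interior by blast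
  define a where "a = e / 2 / norm c"
  have a: "a > 0" using e assms(2) by (simp add: a_def)
  have "dist v (v - a *\<^sub>R c) = e / 2" using e(1) assms(2) by (simp add: dist_norm a_def)
  then have "v - a *\<^sub>R c \<in> K" using e by auto
  then have "a * (c \<bullet> c) \<le> c \<bullet> v"
    using assms(1) by (auto simp: dual_cone_def inner_diff_right)
  moreover have "0 < a * (c \<bullet> c)" using a assms(2) by simp
  ultimately show ?thesis by linarith
qed

lemma cone_add_interior:
  fixes K :: "'b::real_normed_vector set"
  assumes "cone K" "convex K" "k \<in> K" "v \<in> interior K"
  shows "k + v \<in> interior K"
proof -
  have "\<forall>x\<in>K. \<forall>y\<in>K. x + y \<in> K" using assms(1,2) convex_cone by blast
  then have "(+) k ` interior K \<subseteq> K" using assms(3) interior_subset by blast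
  from interior_maximal[OF this open_translation[OF open_interior]] assms(4)
  show ?thesis by blast
qed

lemma cone_scaleR_interior:
  fixes K :: "'b::real_normed_vector set"
  assumes "cone K" "0 < q" "v \<in> interior K"
  shows "q *\<^sub>R v \<in> interior K"
proof -
  have "(\<lambda>u. q *\<^sub>R u) ` interior K \<subseteq> K"
    using assms(1,2) interior_subset unfolding cone_def by fastforce
  from interior_maximal[OF this open_scaling[OF _ open_interior]] assms(2,3)
  show ?thesis by auto
qed

lemma dual_generator_subset_dual_cone: "dual_generator K C \<Longrightarrow> C \<subseteq> dual_cone K"
  unfolding dual_generator_def by (metis hull_subset)

lemma dual_generator_nonempty:
  assumes "dual_generator K C"
  shows "C \<noteq> {}"
proof
  assume "C = {}"
  have "dual_cone K = cone hull C" using assms by (simp add: dual_generator_def)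
  with \<open>C = {}\<close> have "dual_cone K = {}" by (simp add: cone_hull_empty)
  moreover have "0 \<in> dual_cone K" by (simp add: dual_cone_def)
  ultimately show False by simp
qed

lemma dual_generator_inner_interior_pos:
  "dual_generator K C \<Longrightarrow> c \<in> C \<Longrightarrow> v \<in> interior K \<Longrightarrow> 0 < c \<bullet> v"
  using dual_cone_inner_interior_pos dual_generator_subset_dual_cone
  unfolding dual_generator_def by blast

lemma inner_le_scal:
  assumes "compact C" "c \<in> C"
  shows "c \<bullet> G z \<le> scal C G z"
  unfolding scal_def using assms by (intro compact_le_Sup) (auto intro: continuous_intros)

definition max_ratio :: "'b::euclidean_space set \<Rightarrow> 'b \<Rightarrow> 'b \<Rightarrow> real" where
  "max_ratio C l \<mu> = Sup ((\<lambda>c. (c \<bullet> l) / (c \<bullet> \<mu>)) ` C)"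

lemma continuous_on_inner_ratio:
  assumes "dual_generator K C" "\<mu> \<in> interior K"
  shows "continuous_on C (\<lambda>c. (c \<bullet> l) / (c \<bullet> \<mu>))"
  using dual_generator_inner_interior_pos[OF assms(1) _ assms(2)]
  by (intro continuous_intros) force

lemma le_max_ratio:
  assumes "dual_generator K C" "\<mu> \<in> interior K" "c \<in> C"
  shows "(c \<bullet> l) / (c \<bullet> \<mu>) \<le> max_ratio C l \<mu>"
  unfolding max_ratio_def
  using assms(1) continuous_on_inner_ratio[OF assms(1,2)] assms(3)
  by (intro compact_le_Sup) (auto simp: dual_generator_def)

lemma max_ratio_bounds:
  assumes C: "dual_generator K C" and "l \<in> K" "\<mu> \<in> interior K" "kless K l \<mu>"
  shows "0 \<le> max_ratio C l \<mu>" "max_ratio C l \<mu> < 1"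
proof -
  obtain c where c: "c \<in> C" and ratio: "max_ratio C l \<mu> = (c \<bullet> l) / (c \<bullet> \<mu>)"
  proof (rule compact_Sup_attained[OF _ dual_generator_nonempty[OF C]
        continuous_on_inner_ratio[OF C assms(3)]])
    show "compact C" using C by (simp add: dual_generator_def)
  qed (auto simp: max_ratio_def)
  have "0 < c \<bullet> (\<mu> - l)"
    using dual_generator_inner_interior_pos[OF C c] assms(4) unfolding kless_def by blast
  moreover have "0 \<le> c \<bullet> l"
    using dual_generator_subset_dual_cone[OF C] c assms(2) unfolding dual_cone_def by blast
  moreover have "0 < c \<bullet> \<mu>" using dual_generator_inner_interior_pos[OF C c assms(3)] .
  ultimately show "0 \<le> max_ratio C l \<mu>" "max_ratio C l \<mu> < 1"
    unfolding ratio by (auto simp: inner_diff_right)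
qed

lemma strongly_K_convex_segment:
  fixes G :: "'a::real_normed_vector \<Rightarrow> 'b::euclidean_space"
  assumes conv: "strongly_K_convex K G JG \<mu>" and lin: "linear (JG w)"
    and c: "c \<in> dual_cone K" and t: "0 \<le> t" "t \<le> 1" and w: "w = z + t *\<^sub>R (y - z)"
  shows "t * (1 - t) * (norm (y - z))\<^sup>2 / 2 * (c \<bullet> \<mu>)
           \<le> t * (c \<bullet> G y) + (1 - t) * (c \<bullet> G z) - c \<bullet> G w"
proof -
  define p where "p = c \<bullet> JG w (y - z)"
  define D where "D = (norm (y - z))\<^sup>2"
  have yw: "y - w = (1 - t) *\<^sub>R (y - z)" and zw: "z - w = (- t) *\<^sub>R (y - z)"
    using w by (simp_all add: algebra_simps)
  have "kle K (JG w (y - w) + ((norm (y - w))\<^sup>2 / 2) *\<^sub>R \<mu>) (G y - G w)"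
    using conv unfolding strongly_K_convex_def by blast
  from kle_imp_inner_le[OF this c]
  have at_y: "(1 - t) * p + (1 - t)\<^sup>2 * D / 2 * (c \<bullet> \<mu>) \<le> c \<bullet> G y - c \<bullet> G w"
    unfolding yw linear_cmul[OF lin] p_def D_def
    by (simp add: inner_add_right inner_diff_right power_mult_distrib)
  have "kle K (JG w (z - w) + ((norm (z - w))\<^sup>2 / 2) *\<^sub>R \<mu>) (G z - G w)"
    using conv unfolding strongly_K_convex_def by blast
  from kle_imp_inner_le[OF this c]
  have at_z: "- t * p + t\<^sup>2 * D / 2 * (c \<bullet> \<mu>) \<le> c \<bullet> G z - c \<bullet> G w"
    unfolding zw linear_cmul[OF lin] p_def D_def
    by (simp add: inner_add_right inner_diff_right power_mult_distrib)
  have "t * (1 - t) * D / 2 * (c \<bullet> \<mu>)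
      = t * ((1 - t) * p + (1 - t)\<^sup>2 * D / 2 * (c \<bullet> \<mu>)) + (1 - t) * (- t * p + t\<^sup>2 * D / 2 * (c \<bullet> \<mu>))"
    by (simp add: field_simps power2_eq_square)
  also have "\<dots> \<le> t * (c \<bullet> G y - c \<bullet> G w) + (1 - t) * (c \<bullet> G z - c \<bullet> G w)"
    using at_y at_z t by (intro add_mono mult_left_mono) auto
  also have "\<dots> = t * (c \<bullet> G y) + (1 - t) * (c \<bullet> G z) - c \<bullet> G w"
    by (simp add: algebra_simps)
  finally show ?thesis unfolding D_def .
qed

lemma surrogate_center: "surrogate K C F JF l \<mu> xk G \<Longrightarrow> G xk = 0"
  unfolding surrogate_def by auto

lemma surrogate_upper_model:
  assumes "surrogate K C F JF l \<mu> xk G" "c \<in> dual_cone K"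
  shows "c \<bullet> G y \<le> c \<bullet> F y - c \<bullet> F xk + (norm (y - xk))\<^sup>2 / 2 * (c \<bullet> l)"
proof -
  obtain JG where smooth: "K_smooth K (\<lambda>x. G x - F x + F xk) (\<lambda>x v. JG x v - JF x v) l"
    and center: "G xk = 0" and flat: "\<And>v. JG xk v - JF xk v = 0"
    using assms(1) unfolding surrogate_def by auto
  have "kle K ((G y - F y + F xk) - (G xk - F xk + F xk))
          ((JG xk (y - xk) - JF xk (y - xk)) + ((norm (y - xk))\<^sup>2 / 2) *\<^sub>R l)"
    using smooth unfolding K_smooth_def by blast
  then have "kle K (G y - F y + F xk) (((norm (y - xk))\<^sup>2 / 2) *\<^sub>R l)"
    by (simp add: center flat)
  from kle_imp_inner_le[OF this assms(2)] show ?thesis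
    by (simp add: inner_add_right inner_diff_right)
qed

lemma surrogate_descent_bound:
  assumes "surrogate K C F JF l \<mu> xk G" "is_minimizer (scal C G) z" "c \<in> dual_cone K"
  shows "c \<bullet> F z - c \<bullet> F xk \<le> c \<bullet> G z"
proof -
  have "kle K (F z - F xk) (G z)" using assms(1,2) unfolding surrogate_def by blast
  from kle_imp_inner_le[OF this assms(3)] show ?thesis by (simp add: inner_diff_right)
qed

lemma scal_surrogate_minimizer_nonpos:
  assumes "dual_generator K C" "surrogate K C F JF l \<mu> xk G" "is_minimizer (scal C G) z"
  shows "scal C G z \<le> 0"
proof -
  have "scal C G xk = 0"
    using dual_generator_nonempty[OF assms(1)] surrogate_center[OF assms(2)]
    by (simp add: scal_def image_constant_conv)
  then show ?thesis using assms(3) unfolding is_minimizer_def by metis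
qed

lemma surrogate_minimizer_dist_le:
  fixes F :: "'a::euclidean_space \<Rightarrow> 'b::euclidean_space"
  assumes C: "dual_generator K C" and mu: "\<mu> \<in> interior K"
    and G: "surrogate K C F JF l \<mu> xk G" and z: "is_minimizer (scal C G) z"
    and y: "\<And>c. c \<in> C \<Longrightarrow> c \<bullet> F y \<le> c \<bullet> F z"
  shows "(norm (z - y))\<^sup>2 \<le> max_ratio C l \<mu> * (norm (xk - y))\<^sup>2"
proof (rule le_if_one_minus_mult_le)
  fix t :: real assume t: "0 < t" "t < 1"
  obtain JG where JG: "\<And>x. (G has_derivative JG x) (at x)" "strongly_K_convex K G JG \<mu>"
    using G unfolding surrogate_def by blast
  \<comment> \<open>\<open>scal C G\<close> need not be differentiable at \<open>z\<close>; instead we use a maximizing \<open>c\<close> at a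
      point \<open>w\<close> between \<open>z\<close> and \<open>y\<close>, and let \<open>t \<rightarrow> 0\<close>.\<close>
  define w where "w = z + t *\<^sub>R (y - z)"
  define D where "D = (norm (z - y))\<^sup>2"
  define E where "E = (norm (xk - y))\<^sup>2"
  have "compact C" using C by (simp add: dual_generator_def)
  have "continuous_on C (\<lambda>c. c \<bullet> G w)" by (intro continuous_intros)
  then obtain c where c: "c \<in> C" and c_max: "scal C G w = c \<bullet> G w"
    unfolding scal_def by (rule compact_Sup_attained[OF \<open>compact C\<close> dual_generator_nonempty[OF C]])
  have c_dual: "c \<in> dual_cone K" using c dual_generator_subset_dual_cone[OF C] by blast
  have c_mu: "0 < c \<bullet> \<mu>" using dual_generator_inner_interior_pos[OF C c mu] .
  have "c \<bullet> G z \<le> scal C G z" using inner_le_scal[OF \<open>compact C\<close> c] .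
  also have "\<dots> \<le> scal C G w" using z unfolding is_minimizer_def by blast
  finally have "c \<bullet> G z \<le> c \<bullet> G w" unfolding c_max .
  with strongly_K_convex_segment[OF JG(2) has_derivative_linear[OF JG(1)] c_dual, of t w z y] t
  have "t * ((1 - t) * D / 2 * (c \<bullet> \<mu>)) \<le> t * (c \<bullet> G y - c \<bullet> G z)"
    unfolding w_def D_def by (simp add: norm_minus_commute algebra_simps)
  then have "(1 - t) * D / 2 * (c \<bullet> \<mu>) \<le> c \<bullet> G y - c \<bullet> G z"
    using t by simp
  moreover have "c \<bullet> G y \<le> c \<bullet> F y - c \<bullet> F xk + E / 2 * (c \<bullet> l)"
    using surrogate_upper_model[OF G c_dual, of y] unfolding E_def by (simp add: norm_minus_commute)
  moreover have "c \<bullet> F z - c \<bullet> F xk \<le> c \<bullet> G z"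
    using surrogate_descent_bound[OF G z c_dual] .
  moreover have "c \<bullet> F y \<le> c \<bullet> F z" using y c .
  ultimately have "(1 - t) * D / 2 * (c \<bullet> \<mu>) \<le> E / 2 * (c \<bullet> l)" by linarith
  then have "(1 - t) * D \<le> E * ((c \<bullet> l) / (c \<bullet> \<mu>))"
    using c_mu by (simp add: field_simps)
  also have "\<dots> \<le> E * max_ratio C l \<mu>"
    using le_max_ratio[OF C mu c] by (intro mult_left_mono) (auto simp: E_def)
  finally show "(1 - t) * (norm (z - y))\<^sup>2 \<le> max_ratio C l \<mu> * (norm (xk - y))\<^sup>2"
    unfolding D_def E_def by (simp add: mult.commute)
qed

lemma scal_surrogate_minimizer_lower:
  assumes "dual_generator K C" "surrogate K C F JF l \<mu> xk G" "is_minimizer (scal C G) z"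
    and "c \<in> C"
  shows "c \<bullet> F z - c \<bullet> F xk \<le> scal C G z"
proof -
  have "c \<bullet> F z - c \<bullet> F xk \<le> c \<bullet> G z"
    using surrogate_descent_bound[OF assms(2,3)] dual_generator_subset_dual_cone[OF assms(1)]
      assms(4) by blast
  also have "\<dots> \<le> scal C G z"
    using assms(1,4) by (intro inner_le_scal) (simp_all add: dual_generator_def)
  finally show ?thesis .
qed

lemma strongly_K_convex_sublevel_bounded:
  fixes F :: "'a::real_normed_vector \<Rightarrow> 'b::euclidean_space"
  assumes conv: "strongly_K_convex K F JF \<mu>" and lin: "bounded_linear (JF x0)"
    and mu: "\<mu> \<in> interior K" and c: "c \<in> dual_cone K" "c \<noteq> 0"
  shows "bounded {z. c \<bullet> F z \<le> c \<bullet> F x0}"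
proof -
  define a where "a = c \<bullet> \<mu>"
  have a: "0 < a" unfolding a_def using dual_cone_inner_interior_pos[OF c mu] .
  obtain B where B: "0 < B" "\<And>v. norm (JF x0 v) \<le> norm v * B"
    using bounded_linear.pos_bounded[OF lin] by blast
  have "norm (z - x0) \<le> 2 * norm c * B / a" if z: "c \<bullet> F z \<le> c \<bullet> F x0" for z
  proof -
    define n where "n = norm (z - x0)"
    have "kle K (JF x0 (z - x0) + (n\<^sup>2 / 2) *\<^sub>R \<mu>) (F z - F x0)"
      using conv unfolding strongly_K_convex_def n_def by blast
    from kle_imp_inner_le[OF this c(1)]
    have "c \<bullet> JF x0 (z - x0) + n\<^sup>2 / 2 * a \<le> 0"
      using z by (simp add: inner_add_right inner_diff_right a_def)
    moreover have "\<bar>c \<bullet> JF x0 (z - x0)\<bar> \<le> norm c * (n * B)"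
      using Cauchy_Schwarz_ineq2[of c] B(2)[of "z - x0"] unfolding n_def
      by (meson mult_left_mono norm_ge_zero order_trans)
    ultimately have "n * (n * a / 2) \<le> n * (norm c * B)"
      by (simp add: power2_eq_square algebra_simps)
    moreover have "0 \<le> n" by (simp add: n_def)
    ultimately have "n * a / 2 \<le> norm c * B"
      using a B(1) by (cases "n = 0") (simp_all add: mult_le_cancel_left_pos)
    then show ?thesis using a unfolding n_def by (simp add: pos_le_divide_eq mult.commute)
  qed
  then have "{z. c \<bullet> F z \<le> c \<bullet> F x0} \<subseteq> cball x0 (2 * norm c * B / a)"
    by (auto simp: dist_norm norm_minus_commute)
  then show ?thesis using bounded_cball bounded_subset by blast
qed

lemma K_stationary_imp_efficient:
  fixes F :: "'a::real_normed_vector \<Rightarrow> 'b::euclidean_space"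
  assumes K: "cone K" "convex K" and conv: "strongly_K_convex K F JF \<mu>"
    and mu: "\<mu> \<in> interior K" and stat: "K_stationary K JF y"
  shows "efficient K F y"
  unfolding efficient_def
proof
  assume "\<exists>z. kle K (F z) (F y) \<and> F z \<noteq> F y"
  then obtain z where z: "kle K (F z) (F y)" "F z \<noteq> F y" by blast
  define q where "q = (norm (z - y))\<^sup>2 / 2"
  have q: "0 < q" using z(2) by (auto simp: q_def)
  have "(F z - F y) - (JF y (z - y) + q *\<^sub>R \<mu>) \<in> K"
    using conv unfolding strongly_K_convex_def kle_def q_def by blast
  moreover have "F y - F z \<in> K" using z(1) unfolding kle_def .
  ultimately have "((F z - F y) - (JF y (z - y) + q *\<^sub>R \<mu>)) + (F y - F z) \<in> K"
    using K convex_cone by blast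
  then have "- (q *\<^sub>R \<mu>) - JF y (z - y) \<in> K" by (simp add: algebra_simps)
  then have "(- (q *\<^sub>R \<mu>) - JF y (z - y)) + q *\<^sub>R \<mu> \<in> interior K"
    using cone_add_interior[OF K] cone_scaleR_interior[OF K(1) q mu] by blast
  then have "- JF y (z - y) \<in> interior K" by simp
  then have "JF y (z - y) \<in> range (JF y) \<inter> uminus ` interior K"
    by (auto intro: image_eqI[where x = "- JF y (z - y)"])
  with stat show False unfolding K_stationary_def by blast
qed

definition surrogate_run ::
  "'b::euclidean_space set \<Rightarrow> 'b set \<Rightarrow> ('a::euclidean_space \<Rightarrow> 'b) \<Rightarrow> ('a \<Rightarrow> 'a \<Rightarrow> 'b)
     \<Rightarrow> 'b \<Rightarrow> 'b \<Rightarrow> (nat \<Rightarrow> 'a) \<Rightarrow> (nat \<Rightarrow> 'a \<Rightarrow> 'b) \<Rightarrow> bool" where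
  "surrogate_run K C F JF l \<mu> x G \<longleftrightarrow>
     (\<forall>k. surrogate K C F JF l \<mu> (x k) (G k) \<and> is_minimizer (scal C (G k)) (x (Suc k)))"

lemma surrogate_run_decseq:
  assumes run: "surrogate_run K C F JF l \<mu> x G" and C: "dual_generator K C" and c: "c \<in> C"
  shows "decseq (\<lambda>k. c \<bullet> F (x k))"
proof (rule decseq_SucI)
  fix k
  have "c \<bullet> F (x (Suc k)) - c \<bullet> F (x k) \<le> scal C (G k) (x (Suc k))"
    using run scal_surrogate_minimizer_lower[OF C _ _ c] unfolding surrogate_run_def by blast
  also have "\<dots> \<le> 0"
    using run scal_surrogate_minimizer_nonpos[OF C] unfolding surrogate_run_def by blast
  finally show "c \<bullet> F (x (Suc k)) \<le> c \<bullet> F (x k)" by simp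
qed

lemma surrogate_run_bounded:
  assumes run: "surrogate_run K C F JF l \<mu> x G" and C: "dual_generator K C"
    and conv: "strongly_K_convex K F JF \<mu>F" and mu: "\<mu>F \<in> interior K"
    and lin: "bounded_linear (JF (x 0))"
  shows "bounded (range x)"
proof -
  obtain c where c: "c \<in> C" using dual_generator_nonempty[OF C] by blast
  have "c \<in> dual_cone K" "c \<noteq> 0"
    using c C dual_generator_subset_dual_cone unfolding dual_generator_def by blast+
  then have "bounded {z. c \<bullet> F z \<le> c \<bullet> F (x 0)}"
    by (rule strongly_K_convex_sublevel_bounded[OF conv lin mu])
  moreover have "range x \<subseteq> {z. c \<bullet> F z \<le> c \<bullet> F (x 0)}"
    using decseqD[OF surrogate_run_decseq[OF run C c]] by auto
  ultimately show ?thesis by (rule bounded_subset)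
qed

lemma surrogate_run_contraction:
  assumes run: "surrogate_run K C F JF l \<mu> x G" and C: "dual_generator K C"
    and mu: "\<mu> \<in> interior K" and y: "\<And>c j. c \<in> C \<Longrightarrow> c \<bullet> F y \<le> c \<bullet> F (x j)"
  shows "norm (x (Suc k) - y) \<le> sqrt (max_ratio C l \<mu>) * norm (x k - y)"
proof -
  have "(norm (x (Suc k) - y))\<^sup>2 \<le> max_ratio C l \<mu> * (norm (x k - y))\<^sup>2"
    using run y surrogate_minimizer_dist_le[OF C mu] unfolding surrogate_run_def by blast
  then have "sqrt ((norm (x (Suc k) - y))\<^sup>2) \<le> sqrt (max_ratio C l \<mu> * (norm (x k - y))\<^sup>2)"
    by (rule real_sqrt_le_mono)
  then show ?thesis by (simp add: real_sqrt_mult)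
qed

lemma surrogate_run_scal_tendsto_0:
  assumes run: "surrogate_run K C F JF l \<mu> x G" and C: "dual_generator K C"
    and F: "isCont F y" and lim: "x \<longlonglongrightarrow> y"
  shows "(\<lambda>k. scal C (G k) (x (Suc k))) \<longlonglongrightarrow> 0"
proof -
  obtain c where c: "c \<in> C" using dual_generator_nonempty[OF C] by blast
  have "(\<lambda>k. c \<bullet> F (x (Suc k)) - c \<bullet> F (x k)) \<longlonglongrightarrow> c \<bullet> F y - c \<bullet> F y"
    using isCont_tendsto_compose[OF F lim] by (intro tendsto_intros LIMSEQ_Suc)
  then have lower: "(\<lambda>k. c \<bullet> F (x (Suc k)) - c \<bullet> F (x k)) \<longlonglongrightarrow> 0" by simp
  show ?thesis
  proof (rule tendsto_sandwich[OF always_eventually always_eventually lower tendsto_const])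
    show "\<forall>k. c \<bullet> F (x (Suc k)) - c \<bullet> F (x k) \<le> scal C (G k) (x (Suc k))"
      using run scal_surrogate_minimizer_lower[OF C _ _ c] unfolding surrogate_run_def by blast
    show "\<forall>k. scal C (G k) (x (Suc k)) \<le> 0"
      using run scal_surrogate_minimizer_nonpos[OF C] unfolding surrogate_run_def by blast
  qed
qed

theorem theorem3:
  fixes K C :: "'b::euclidean_space set"
    and F :: "'a::euclidean_space \<Rightarrow> 'b" and JF :: "'a \<Rightarrow> 'a \<Rightarrow> 'b"
    and l \<mu> :: 'b
    and x :: "nat \<Rightarrow> 'a" and G :: "nat \<Rightarrow> 'a \<Rightarrow> 'b"
  assumes K: "proper_cone K"
    and C: "dual_generator K C"
    and F_deriv: "\<And>z. (F has_derivative JF z) (at z)"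
    and F_sconv: "\<exists>\<mu>F \<in> interior K. strongly_K_convex K F JF \<mu>F"
    and l_in: "l \<in> K" and mu_in: "\<mu> \<in> interior K"
    and l_less_mu: "kless K l \<mu>"
    and G_surr: "\<And>k. surrogate K C F JF l \<mu> (x k) (G k)"
    and step: "\<And>k. is_minimizer (scal C (G k)) (x (Suc k))"
    and infinite_run: "\<And>k. x (Suc k) \<noteq> x k"
    and A_ii: "\<And>r xs. strict_mono r \<Longrightarrow> (x \<circ> r) \<longlonglongrightarrow> xs
                 \<Longrightarrow> (\<lambda>j. scal C (G (r j)) (x (Suc (r j)))) \<longlonglongrightarrow> 0
                 \<Longrightarrow> K_stationary K JF xs"
  shows "\<exists>xs. x \<longlonglongrightarrow> xs \<and> efficient K F xs \<and>
           (\<forall>k. norm (x (Suc k) - xs)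
                  \<le> sqrt (Sup ((\<lambda>c. (c \<bullet> l) / (c \<bullet> \<mu>)) ` C)) * norm (x k - xs))"
proof -
  have K_cone: "cone K" "convex K" using K unfolding proper_cone_def by auto
  have run: "surrogate_run K C F JF l \<mu> x G" using G_surr step by (simp add: surrogate_run_def)
  obtain \<mu>F where \<mu>F: "\<mu>F \<in> interior K" "strongly_K_convex K F JF \<mu>F" using F_sconv by blast
  have F_cont: "\<And>z. isCont F z" using F_deriv has_derivative_continuous by blast
  have "bounded (range x)"
    using surrogate_run_bounded[OF run C \<mu>F(2,1) has_derivative_bounded_linear[OF F_deriv]] .
  then obtain y r where r: "strict_mono r" "(x \<circ> r) \<longlonglongrightarrow> y"
    using bounded_imp_convergent_subsequence by blast
  have "c \<bullet> F y \<le> c \<bullet> F (x j)" if "c \<in> C" for c j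
    using decseq_le_subseq_limit[of "\<lambda>z. c \<bullet> F z", OF surrogate_run_decseq[OF run C that] _ r]
      F_cont by (auto intro: continuous_intros)
  then have contraction: "\<And>k. norm (x (Suc k) - y) \<le> sqrt (max_ratio C l \<mu>) * norm (x k - y)"
    by (rule surrogate_run_contraction[OF run C mu_in])
  have lim: "x \<longlonglongrightarrow> y"
    using max_ratio_bounds[OF C l_in mu_in l_less_mu]
    by (intro LIMSEQ_of_contraction_factor[where \<rho> = "sqrt (max_ratio C l \<mu>)"] contraction) auto
  have "K_stationary K JF y"
    using A_ii[of id y] lim surrogate_run_scal_tendsto_0[OF run C F_cont lim]
    by (simp add: strict_mono_id)
  then have "efficient K F y" by (rule K_stationary_imp_efficient[OF K_cone \<mu>F(2,1)])
  with lim contraction show ?thesis unfolding max_ratio_def by blast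
qed

end
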